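(* Let $A$ be a commutative ring. The assignment $\epsilon(a)\mapsto w_{21}(-1)x_{21}(a)$ ($a\in A$) induces a well-defined group isomorphism $\gamma:C(A)\to\mathrm{St}(2,A)/C(2,A)$. Furthermore, the restriction of $\gamma$ to $U(A)$ induces an isomorphism $U(A)\cong K_2(2,A)/C(2,A)$.
   Context: $C(A)$ is the group with generators $\epsilon(a)$, $a\in A$, and relations: with $h(u):=\epsilon(-u)\epsilon(-u^{-1})\epsilon(-u)$ for $u\in A^\times$, (1) $h(u)h(v)=h(uv)$; (2) $\epsilon(a)\epsilon(0)\epsilon(b)=h(-1)\epsilon(a+b)$; (3) $h(u)\epsilon(a)h(u)=\epsilon(u^2a)$. $U(A)$ is the kernel of the homomorphism $C(A)\to\mathrm{SL}_2(A)$, $\epsilon(a)\mapsto\begin{pmatrix}a&1\\-1&0\end{pmatrix}$. $\mathrm{St}(2,A)$ is the group generated by $x_{12}(t),x_{21}(t)$, $t\in A$, with relations $x_{ij}(s)x_{ij}(t)=x_{ij}(s+t)$ and $w_{ij}(u)x_{ij}(t)w_{ij}(-u)=x_{ji}(-u^{-2}t)$ ($u\in A^\times$), where $w_{ij}(u):=x_{ij}(u)x_{ji}(-u^{-1})x_{ij}(u)$. $\phi:\mathrm{St}(2,A)\to\mathrm{SL}_2(A)$ sends $x_{12}(t)\mapsto\begin{pmatrix}1&t\\0&1\end{pmatrix}$, $x_{21}(t)\mapsto\begin{pmatrix}1&0\\t&1\end{pmatrix}$, and $K_2(2,A)=\ker\phi$. With $h_{12}(u)=w_{12}(u)w_{12}(-1)$,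 the symbols $c(u,v)=h_{12}(u)h_{12}(v)h_{12}(uv)^{-1}$ ($u,v\in A^\times$) are central in $\mathrm{St}(2,A)$, and $C(2,A)$ is the subgroup they generate. *)

theory Defs
  imports "HOL-Algebra.Algebra"
begin

text \<open>Words in generators of type 'g: a letter (x, True) is x, (x, False) is x inverse.\<close>
type_synonym 'g word = "('g \<times> bool) list"

definition gen :: "'g \<Rightarrow> 'g word" where
  "gen x = [(x, True)]"

definition inv_word :: "'g word \<Rightarrow> 'g word" where
  "inv_word w = rev (map (\<lambda>(x, b). (x, \<not> b)) w)"

text \<open>The congruence on words generated by free cancellation and the relations R
  (each relation is a pair of words (l, r) meaning l = r).\<close>
inductive pres_eq :: "('g word \<times> 'g word) set \<Rightarrow> 'g word \<Rightarrow> 'g word \<Rightarrow> bool"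
  for R where
  pe_refl: "pres_eq R w w"
| pe_sym: "pres_eq R u v \<Longrightarrow> pres_eq R v u"
| pe_trans: "pres_eq R u v \<Longrightarrow> pres_eq R v w \<Longrightarrow> pres_eq R u w"
| pe_cancel: "pres_eq R [(x, b), (x, \<not> b)] []"
| pe_rel: "(l, r) \<in> R \<Longrightarrow> pres_eq R l r"
| pe_cong: "pres_eq R u u' \<Longrightarrow> pres_eq R v v' \<Longrightarrow> pres_eq R (u @ v) (u' @ v')"

definition pres_class :: "('g word \<times> 'g word) set \<Rightarrow> 'g word \<Rightarrow> 'g word set" where
  "pres_class R w = {v. pres_eq R v w}"

definition pres_mult :: "('g word \<times> 'g word) set \<Rightarrow> 'g word set \<Rightarrow> 'g word set \<Rightarrow> 'g word set" where
  "pres_mult R P Q = pres_class R ((SOME u. u \<in> P) @ (SOME v. v \<in> Q))"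

definition presented_group :: "('g word \<times> 'g word) set \<Rightarrow> ('g word set) monoid" where
  "presented_group R = \<lparr> carrier = range (pres_class R),
     Group.monoid.mult = pres_mult R,
     one = pres_class R [] \<rparr>"

definition eval_word :: "('b, 'c) monoid_scheme \<Rightarrow> ('g \<Rightarrow> 'b) \<Rightarrow> 'g word \<Rightarrow> 'b" where
  "eval_word G f w = foldr (\<lambda>(x, b) acc. Group.monoid.mult G (if b then f x else m_inv G (f x)) acc) w (Group.monoid.one G)"

definition pres_map :: "('b, 'c) monoid_scheme \<Rightarrow> ('g \<Rightarrow> 'b) \<Rightarrow> 'g word set \<Rightarrow> 'b" where
  "pres_map G f P = eval_word G f (SOME w. w \<in> P)"

text \<open>A 2x2 matrix (a b; c d) is represented as the tuple (a, b, c, d).\<close>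
definition SL2 :: "('a::comm_ring_1 \<times> 'a \<times> 'a \<times> 'a) monoid" where
  "SL2 = \<lparr> carrier = {(a, b, c, d). a * d - b * c = 1},
     Group.monoid.mult = (\<lambda>(a, b, c, d) (e, f, g, h).
        (a * e + b * g, a * f + b * h, c * e + d * g, c * f + d * h)),
     one = (1, 0, 0, 1) \<rparr>"

definition rinv :: "'a::comm_ring_1 \<Rightarrow> 'a" where
  "rinv u = (SOME v. u * v = 1)"

definition h_word :: "'a::comm_ring_1 \<Rightarrow> 'a word" where
  "h_word u = gen (- u) @ gen (- rinv u) @ gen (- u)"

definition CA_rels :: "('a::comm_ring_1 word \<times> 'a word) set" where
  "CA_rels =
     {(h_word u @ h_word v, h_word (u * v)) | u v. u dvd 1 \<and> v dvd 1}
   \<union> {(gen a @ gen 0 @ gen b, h_word (- 1) @ gen (a + b)) | a b. True}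
   \<union> {(h_word u @ gen a @ h_word u, gen (u ^ 2 * a)) | u a. u dvd 1}"

definition CA :: "('a::comm_ring_1 word set) monoid" where
  "CA = presented_group CA_rels"

definition eps_mat :: "'a::comm_ring_1 \<Rightarrow> 'a \<times> 'a \<times> 'a \<times> 'a" where
  "eps_mat a = (a, 1, - 1, 0)"

definition UA :: "('a::comm_ring_1 word set) set" where
  "UA = {P \<in> carrier CA. pres_map SL2 eps_mat P = \<one>\<^bsub>SL2\<^esub>}"

datatype 'a st_gen = X12 'a | X21 'a

text \<open>x i t: for i = True this is x_12(t), for i = False it is x_21(t);
  x (\<not> i) t is then x_ji(t).\<close>
fun xg :: "bool \<Rightarrow> 'a \<Rightarrow> 'a st_gen" where
  "xg True t = X12 t"
| "xg False t = X21 t"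

definition w_word :: "bool \<Rightarrow> 'a::comm_ring_1 \<Rightarrow> 'a st_gen word" where
  "w_word i u = gen (xg i u) @ gen (xg (\<not> i) (- rinv u)) @ gen (xg i u)"

definition St_rels :: "('a::comm_ring_1 st_gen word \<times> 'a st_gen word) set" where
  "St_rels =
     {(gen (xg i s) @ gen (xg i t), gen (xg i (s + t))) | i s t. True}
   \<union> {(w_word i u @ gen (xg i t) @ w_word i (- u), gen (xg (\<not> i) (- (rinv u ^ 2 * t))))
        | i u t. u dvd 1}"

definition St :: "('a::comm_ring_1 st_gen word set) monoid" where
  "St = presented_group St_rels"

fun phi_gen :: "'a::comm_ring_1 st_gen \<Rightarrow> 'a \<times> 'a \<times> 'a \<times> 'a" where
  "phi_gen (X12 t) = (1, t, 0, 1)"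
| "phi_gen (X21 t) = (1, 0, t, 1)"

definition K2 :: "('a::comm_ring_1 st_gen word set) set" where
  "K2 = {P \<in> carrier St. pres_map SL2 phi_gen P = \<one>\<^bsub>SL2\<^esub>}"

definition h12_word :: "'a::comm_ring_1 \<Rightarrow> 'a st_gen word" where
  "h12_word u = w_word True u @ w_word True (- 1)"

definition c_word :: "'a::comm_ring_1 \<Rightarrow> 'a \<Rightarrow> 'a st_gen word" where
  "c_word u v = h12_word u @ h12_word v @ inv_word (h12_word (u * v))"

definition C2 :: "('a::comm_ring_1 st_gen word set) set" where
  "C2 = generate St {pres_class St_rels (c_word u v) | u v. u dvd 1 \<and> v dvd 1}"

end

(* C(A) and St(2,A) are given by presentations, so homomorphisms out of them are
   assignments on generators respecting the relations. In any group, elements eps(a)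
   satisfying the relations of C(A) give a Steinberg family x21(t) = eps(0)^-1 eps(t),
   x12(t) = eps(-t) eps(0)^-1 in which h12(u) = h(u), so all symbols c(u,v) vanish.
   Conversely, a Steinberg family with trivial symbols gives elements
   eps(a) = w21(-1) x21(a) satisfying the relations of C(A). The symbols are central in
   St(2,A), since h12(u) scales x12 by u^2 and x21 by u^-2; so C(2,A) is normal and the
   second construction applies to St(2,A)/C(2,A). The two resulting homomorphisms are
   mutually inverse on generators. Finally, St(2,A) -> C(A) followed by C(A) -> SL2(A) is
   phi, so the isomorphism matches U(A) with K2(2,A)/C(2,A). *)

theory Submission
  imports Defs
begin

section \<open>Words and presented groups\<close>

context group
begin

lemma l_inv_assoc: "x \<in> carrier G \<Longrightarrow> y \<in> carrier G \<Longrightarrow> inv x \<otimes> (x \<otimes> y) = y"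
  by (simp add: m_assoc[symmetric])

lemma r_inv_assoc: "x \<in> carrier G \<Longrightarrow> y \<in> carrier G \<Longrightarrow> x \<otimes> (inv x \<otimes> y) = y"
  by (simp add: m_assoc[symmetric])

lemma mult_eq_swap_inv:
  assumes "x \<in> carrier G" "a \<in> carrier G" "b \<in> carrier G" and "x \<otimes> a = b \<otimes> x"
  shows "inv x \<otimes> b = a \<otimes> inv x"
proof -
  have "inv x \<otimes> b = inv x \<otimes> (b \<otimes> x \<otimes> inv x)" using assms by (simp add: m_assoc)
  also have "\<dots> = inv x \<otimes> (x \<otimes> a \<otimes> inv x)" by (simp only: assms(4))
  also have "\<dots> = a \<otimes> inv x" using assms(1-3) by (simp add: m_assoc[symmetric])
  finally show ?thesis .
qed

lemma generate_commute:
  assumes S: "S \<subseteq> carrier G" and comm: "\<And>s. s \<in> S \<Longrightarrow> s \<otimes> g = g \<otimes> s"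
    and g: "g \<in> carrier G" and c: "c \<in> generate G S"
  shows "c \<otimes> g = g \<otimes> c"
  using c
proof (induction rule: generate.induct)
  case (inv s)
  then show ?case
    using mult_eq_swap_inv[of s g g] comm S g by auto
next
  case (eng c d)
  then have "c \<in> carrier G" "d \<in> carrier G"
    using generate_in_carrier[OF S] by auto
  with eng.IH g show ?case
    by (metis m_assoc)
qed (use g S comm in auto)

lemma eval_word_Nil [simp]: "eval_word G f [] = \<one>"
  by (simp add: eval_word_def)

lemma eval_word_Cons:
  "eval_word G f ((x, b) # w) = (if b then f x else inv (f x)) \<otimes> eval_word G f w"
  by (simp add: eval_word_def)

lemma eval_word_closed: "(\<And>x. f x \<in> carrier G) \<Longrightarrow> eval_word G f w \<in> carrier G"
  by (induction w) (auto simp: eval_word_def)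

lemma eval_word_append:
  assumes "\<And>x. f x \<in> carrier G"
  shows "eval_word G f (u @ v) = eval_word G f u \<otimes> eval_word G f v"
proof (induction u)
  case Nil
  then show ?case by (simp add: eval_word_closed assms)
next
  case (Cons a u)
  then show ?case
    by (cases a) (simp add: eval_word_Cons m_assoc eval_word_closed assms)
qed

lemma eval_word_gen [simp]: "(\<And>x. f x \<in> carrier G) \<Longrightarrow> eval_word G f (gen x) = f x"
  by (simp add: gen_def eval_word_Cons)

lemma eval_word_inv_word:
  assumes "\<And>x. f x \<in> carrier G"
  shows "eval_word G f (inv_word w) = inv (eval_word G f w)"
proof (induction w)
  case Nil
  then show ?case by (simp add: inv_word_def)
next
  case (Cons a w)
  obtain x b where a: "a = (x, b)" by force
  have "inv_word (a # w) = inv_word w @ [(x, \<not> b)]" by (simp add: inv_word_def a)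
  with Cons show ?case
    by (cases b) (simp_all add: a eval_word_append eval_word_Cons eval_word_closed inv_mult_group assms)
qed

lemma eval_word_pres_eq:
  assumes f: "\<And>x. f x \<in> carrier G"
    and R: "\<And>l r. (l, r) \<in> R \<Longrightarrow> eval_word G f l = eval_word G f r"
    and "pres_eq R u v"
  shows "eval_word G f u = eval_word G f v"
  using assms(3)
proof (induction rule: pres_eq.induct)
  case (pe_cancel x b)
  then show ?case using f by (simp add: eval_word_Cons)
next
  case (pe_rel l r)
  then show ?case by (rule R)
next
  case (pe_cong u u' v v')
  then show ?case by (simp add: eval_word_append f)
qed auto

lemma eval_word_commute:
  assumes a: "a \<in> carrier G" and f: "\<And>x. f x \<in> carrier G"
    and comm: "\<And>x. a \<otimes> f x = f x \<otimes> a"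
  shows "a \<otimes> eval_word G f w = eval_word G f w \<otimes> a"
proof (induction w)
  case Nil
  then show ?case using a by simp
next
  case (Cons c w)
  obtain x b where c: "c = (x, b)" by force
  have "a \<otimes> inv (f x) = inv (f x) \<otimes> a"
    using mult_eq_swap_inv[of "f x" a a] comm a f by simp
  then have gen_comm: "a \<otimes> (if b then f x else inv (f x)) = (if b then f x else inv (f x)) \<otimes> a"
    using comm by simp
  have "a \<otimes> ((if b then f x else inv (f x)) \<otimes> eval_word G f w)
      = (if b then f x else inv (f x)) \<otimes> (a \<otimes> eval_word G f w)"
    using gen_comm a f by (simp add: m_assoc[symmetric] eval_word_closed)
  also have "\<dots> = ((if b then f x else inv (f x)) \<otimes> eval_word G f w) \<otimes> a"
    using Cons a f by (simp add: m_assoc eval_word_closed)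
  finally show ?case by (simp add: c eval_word_Cons)
qed

end

lemma (in group_hom) hom_eval_word:
  assumes "\<And>x. f x \<in> carrier G"
  shows "h (eval_word G f w) = eval_word H (\<lambda>x. h (f x)) w"
  by (induction w) (auto simp: eval_word_def assms G.eval_word_closed[unfolded eval_word_def])

lemma pres_class_eq_iff: "pres_class R u = pres_class R v \<longleftrightarrow> pres_eq R u v"
proof
  assume "pres_class R u = pres_class R v"
  then have "u \<in> pres_class R v" unfolding pres_class_def using pe_refl by blast
  then show "pres_eq R u v" unfolding pres_class_def by simp
next
  assume uv: "pres_eq R u v"
  show "pres_class R u = pres_class R v"
    unfolding pres_class_def using pe_trans[OF _ uv] pe_trans[OF _ pe_sym[OF uv]] by blast
qed

lemma pres_eq_some_pres_class: "pres_eq R (SOME v. v \<in> pres_class R w) w"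
  using someI[of "\<lambda>v. v \<in> pres_class R w" w] pe_refl unfolding pres_class_def by auto

lemma pres_class_rel: "(l, r) \<in> R \<Longrightarrow> pres_class R l = pres_class R r"
  by (simp add: pres_class_eq_iff pe_rel)

lemma pres_eq_append_inv_word: "pres_eq R (w @ inv_word w) []"
proof (induction w)
  case Nil
  then show ?case by (simp add: inv_word_def pe_refl)
next
  case (Cons a w)
  obtain x b where a: "a = (x, b)" by force
  have "(a # w) @ inv_word (a # w) = [a] @ (w @ inv_word w) @ [(x, \<not> b)]"
    by (simp add: inv_word_def a)
  moreover have "pres_eq R ([a] @ (w @ inv_word w) @ [(x, \<not> b)]) ([a] @ [] @ [(x, \<not> b)])"
    by (intro pe_cong pe_refl Cons)
  moreover have "pres_eq R ([a] @ [] @ [(x, \<not> b)]) []"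
    using pe_cancel[of R x b] by (simp add: a)
  ultimately show ?case by (metis pe_trans)
qed

lemma inv_word_inv_word [simp]: "inv_word (inv_word w) = w"
  by (induction w) (auto simp: inv_word_def)

lemma pres_eq_inv_word_append: "pres_eq R (inv_word w @ w) []"
  using pres_eq_append_inv_word[of R "inv_word w"] by simp

lemma pres_class_in_carrier [simp]: "pres_class R w \<in> carrier (presented_group R)"
  by (simp add: presented_group_def)

lemma presented_group_carrierE:
  assumes "P \<in> carrier (presented_group R)"
  obtains w where "P = pres_class R w"
  using assms by (auto simp: presented_group_def)

lemma presented_group_mult [simp]:
  "pres_class R u \<otimes>\<^bsub>presented_group R\<^esub> pres_class R v = pres_class R (u @ v)"
  unfolding presented_group_def pres_mult_def by (simp add: pres_class_eq_iff pe_cong pres_eq_some_pres_class)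

lemma presented_group_one: "\<one>\<^bsub>presented_group R\<^esub> = pres_class R []"
  by (simp add: presented_group_def)

lemma group_presented_group: "group (presented_group R)"
proof (rule groupI)
  fix P
  assume "P \<in> carrier (presented_group R)"
  then obtain w where P: "P = pres_class R w" by (rule presented_group_carrierE)
  show "\<exists>Q\<in>carrier (presented_group R). Q \<otimes>\<^bsub>presented_group R\<^esub> P = \<one>\<^bsub>presented_group R\<^esub>"
    by (rule bexI[of _ "pres_class R (inv_word w)"])
      (simp_all add: P presented_group_one pres_class_eq_iff pres_eq_inv_word_append)
qed (auto elim!: presented_group_carrierE simp: presented_group_one)

lemma presented_group_inv:
  "inv\<^bsub>presented_group R\<^esub> pres_class R w = pres_class R (inv_word w)"
proof -
  interpret group "presented_group R" by (rule group_presented_group)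
  show ?thesis
    by (rule inv_equality) (simp_all add: presented_group_one pres_class_eq_iff pres_eq_inv_word_append)
qed

lemma pres_class_eq_eval_word:
  "pres_class R w = eval_word (presented_group R) (\<lambda>x. pres_class R (gen x)) w"
proof (induction w)
  case Nil
  then show ?case by (simp add: eval_word_def presented_group_one)
next
  case (Cons a w)
  interpret group "presented_group R" by (rule group_presented_group)
  obtain x b where a: "a = (x, b)" by force
  have letter: "pres_class R [(x, b)] =
      (if b then pres_class R (gen x) else inv\<^bsub>presented_group R\<^esub> pres_class R (gen x))"
    by (cases b) (simp_all add: presented_group_inv gen_def inv_word_def)
  have "pres_class R ((x, b) # w) = pres_class R [(x, b)] \<otimes>\<^bsub>presented_group R\<^esub> pres_class R w"
    by (simp only: presented_group_mult append_Cons append_Nil)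
  then show ?case by (simp only: a letter eval_word_Cons Cons)
qed

context group
begin

lemma pres_map_pres_class:
  assumes "\<And>x. f x \<in> carrier G" and "\<And>l r. (l, r) \<in> R \<Longrightarrow> eval_word G f l = eval_word G f r"
  shows "pres_map G f (pres_class R w) = eval_word G f w"
  unfolding pres_map_def by (rule eval_word_pres_eq[OF assms pres_eq_some_pres_class])

lemma pres_map_hom:
  assumes f: "\<And>x. f x \<in> carrier G" and R: "\<And>l r. (l, r) \<in> R \<Longrightarrow> eval_word G f l = eval_word G f r"
  shows "pres_map G f \<in> hom (presented_group R) G"
  by (rule homI) (auto elim!: presented_group_carrierE
      simp: pres_map_pres_class[OF f R] eval_word_closed eval_word_append f)

lemma hom_presented_group_eq_eval_word:
  assumes "h \<in> hom (presented_group R) G"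
  shows "h (pres_class R w) = eval_word G (\<lambda>x. h (pres_class R (gen x))) w"
proof -
  interpret group_hom "presented_group R" G h
    using assms group_presented_group by (simp add: group_hom_def group_hom_axioms_def group_axioms)
  have "h (pres_class R w) = h (eval_word (presented_group R) (\<lambda>x. pres_class R (gen x)) w)"
    by (rule arg_cong[OF pres_class_eq_eval_word])
  also have "\<dots> = eval_word G (\<lambda>x. h (pres_class R (gen x))) w"
    by (rule hom_eval_word) simp
  finally show ?thesis .
qed

lemma hom_presented_group_eqI:
  assumes h: "h \<in> hom (presented_group R) G" and k: "k \<in> hom (presented_group R) G"
    and gens: "\<And>x. h (pres_class R (gen x)) = k (pres_class R (gen x))"
    and P: "P \<in> carrier (presented_group R)"
  shows "h P = k P"
proof -
  obtain w where w: "P = pres_class R w" using P by (rule presented_group_carrierE)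
  have "h P = eval_word G (\<lambda>x. h (pres_class R (gen x))) w"
    unfolding w by (rule hom_presented_group_eq_eval_word[OF h])
  also have "\<dots> = eval_word G (\<lambda>x. k (pres_class R (gen x))) w"
    using gens by simp
  also have "\<dots> = k P"
    unfolding w by (rule hom_presented_group_eq_eval_word[OF k, symmetric])
  finally show ?thesis .
qed

lemma pres_map_eq_hom:
  assumes h: "h \<in> hom (presented_group R) G"
    and f: "\<And>x. f x = h (pres_class R (gen x))"
    and P: "P \<in> carrier (presented_group R)"
  shows "pres_map G f P = h P"
proof -
  obtain w where w: "P = pres_class R w" using P by (rule presented_group_carrierE)
  have P_class: "pres_class R (SOME v. v \<in> P) = P"
    unfolding w pres_class_eq_iff by (rule pres_eq_some_pres_class)
  have "f = (\<lambda>x. h (pres_class R (gen x)))" using f by auto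
  then show ?thesis
    unfolding pres_map_def using hom_presented_group_eq_eval_word[OF h, of "SOME v. v \<in> P"] P_class
    by simp
qed

end

lemma presented_group_central:
  assumes a: "a \<in> carrier (presented_group R)"
    and gens: "\<And>x. a \<otimes>\<^bsub>presented_group R\<^esub> pres_class R (gen x) = pres_class R (gen x) \<otimes>\<^bsub>presented_group R\<^esub> a"
    and P: "P \<in> carrier (presented_group R)"
  shows "a \<otimes>\<^bsub>presented_group R\<^esub> P = P \<otimes>\<^bsub>presented_group R\<^esub> a"
proof -
  interpret group "presented_group R" by (rule group_presented_group)
  obtain w where w: "P = pres_class R w" using P by (rule presented_group_carrierE)
  have "a \<otimes>\<^bsub>presented_group R\<^esub> eval_word (presented_group R) (\<lambda>x. pres_class R (gen x)) w
      = eval_word (presented_group R) (\<lambda>x. pres_class R (gen x)) w \<otimes>\<^bsub>presented_group R\<^esub> a"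
    by (rule eval_word_commute[OF a]) (simp_all add: gens)
  then show ?thesis
    unfolding w by (simp only: pres_class_eq_eval_word[of R w, symmetric])
qed

lemma unit_mult_unit: "(u::'a::comm_semiring_1) dvd 1 \<Longrightarrow> v dvd 1 \<Longrightarrow> u * v dvd 1"
  by (metis mult_dvd_mono mult_1_left)

lemma rinv_unique: "(u::'a::comm_ring_1) * v = 1 \<Longrightarrow> rinv u = v"
proof -
  assume uv: "u * v = 1"
  have u_rinv: "u * rinv u = 1" unfolding rinv_def using someI[of "\<lambda>v. u * v = 1" v] uv by blast
  have "rinv u = (u * v) * rinv u" using uv by simp
  also have "\<dots> = v * (u * rinv u)" by (simp add: mult_ac)
  finally show ?thesis using u_rinv by simp
qed

lemma unit_mult_rinv [simp]: "(u::'a::comm_ring_1) dvd 1 \<Longrightarrow> u * rinv u = 1"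
  by (metis dvdE rinv_unique)

lemma rinv_mult_unit [simp]: "(u::'a::comm_ring_1) dvd 1 \<Longrightarrow> rinv u * u = 1"
  using unit_mult_rinv[of u] by (simp add: mult.commute)

lemma is_unit_rinv [simp]: "(u::'a::comm_ring_1) dvd 1 \<Longrightarrow> rinv u dvd 1"
  by (metis dvdI rinv_mult_unit)

lemma rinv_1 [simp]: "rinv (1::'a::comm_ring_1) = 1"
  by (rule rinv_unique) simp

lemma rinv_minus_1 [simp]: "rinv (- 1::'a::comm_ring_1) = - 1"
  by (rule rinv_unique) simp

lemma rinv_minus: "(u::'a::comm_ring_1) dvd 1 \<Longrightarrow> rinv (- u) = - rinv u"
  by (rule rinv_unique) simp

lemma rinv_rinv [simp]: "(u::'a::comm_ring_1) dvd 1 \<Longrightarrow> rinv (rinv u) = u"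
  by (rule rinv_unique) simp

lemma rinv_mult: "(u::'a::comm_ring_1) dvd 1 \<Longrightarrow> v dvd 1 \<Longrightarrow> rinv (u * v) = rinv u * rinv v"
  by (rule rinv_unique) (metis mult.commute mult.left_commute mult_1_right unit_mult_rinv)

lemma rinv_power2_cancel: "(u::'a::comm_ring_1) dvd 1 \<Longrightarrow> rinv u ^ 2 * (u ^ 2 * s) = s"
proof -
  assume "u dvd 1"
  then have "rinv u ^ 2 * (u ^ 2 * s) = (u * rinv u) ^ 2 * s"
    by (simp add: power2_eq_square algebra_simps)
  with \<open>u dvd 1\<close> show ?thesis by simp
qed

section \<open>Families satisfying the Steinberg relations\<close>


definition st_w :: "('b, 'c) monoid_scheme \<Rightarrow> ('a::comm_ring_1 st_gen \<Rightarrow> 'b) \<Rightarrow> bool \<Rightarrow> 'a \<Rightarrow> 'b" where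
  "st_w G f i u = f (xg i u) \<otimes>\<^bsub>G\<^esub> f (xg (\<not> i) (- rinv u)) \<otimes>\<^bsub>G\<^esub> f (xg i u)"

definition st_h :: "('b, 'c) monoid_scheme \<Rightarrow> ('a::comm_ring_1 st_gen \<Rightarrow> 'b) \<Rightarrow> bool \<Rightarrow> 'a \<Rightarrow> 'b" where
  "st_h G f i u = st_w G f i u \<otimes>\<^bsub>G\<^esub> st_w G f i (- 1)"

definition st_symbol :: "('b, 'c) monoid_scheme \<Rightarrow> ('a::comm_ring_1 st_gen \<Rightarrow> 'b) \<Rightarrow> 'a \<Rightarrow> 'a \<Rightarrow> 'b" where
  "st_symbol G f u v = st_h G f True u \<otimes>\<^bsub>G\<^esub> st_h G f True v \<otimes>\<^bsub>G\<^esub> inv\<^bsub>G\<^esub> st_h G f True (u * v)"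

locale st_family = group G for G (structure) +
  fixes f :: "'r::comm_ring_1 st_gen \<Rightarrow> 'a"
  assumes gen_closed [simp]: "f g \<in> carrier G"
    and gen_add: "f (xg i s) \<otimes> f (xg i t) = f (xg i (s + t))"
    and st_w_conj:
      "u dvd 1 \<Longrightarrow> st_w G f i u \<otimes> f (xg i t) \<otimes> st_w G f i (- u) = f (xg (\<not> i) (- (rinv u ^ 2 * t)))"
begin

lemma st_w_closed [simp]: "st_w G f i u \<in> carrier G"
  by (simp add: st_w_def)

lemma st_h_closed [simp]: "st_h G f i u \<in> carrier G"
  by (simp add: st_h_def)

lemma st_symbol_closed [simp]: "st_symbol G f u v \<in> carrier G"
  by (simp add: st_symbol_def)

lemma gen_add_assoc: "r \<in> carrier G \<Longrightarrow> f (xg i s) \<otimes> (f (xg i t) \<otimes> r) = f (xg i (s + t)) \<otimes> r"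
  by (simp add: m_assoc[symmetric] gen_add)

lemma gen_zero [simp]: "f (xg i 0) = \<one>"
  using gen_add[of i 0 0] by (metis add_0 gen_closed one_closed r_one l_cancel)

lemma st_w_minus: "u dvd 1 \<Longrightarrow> st_w G f i (- u) = inv (st_w G f i u)"
  by (rule inv_equality[symmetric]) (simp_all add: st_w_def m_assoc gen_add_assoc gen_add rinv_minus)

lemma st_w_commute_same:
  "u dvd 1 \<Longrightarrow> st_w G f i u \<otimes> f (xg i t) = f (xg (\<not> i) (- (rinv u ^ 2 * t))) \<otimes> st_w G f i u"
  using st_w_conj[of u i t] by (simp add: st_w_minus inv_solve_right')

lemma st_w_commute_opp:
  assumes u: "u dvd 1"
  shows "st_w G f i u \<otimes> f (xg (\<not> i) s) = f (xg i (- (u ^ 2 * s))) \<otimes> st_w G f i u"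
proof -
  have "rinv (- u) ^ 2 * (- (u ^ 2 * s)) = - s"
    using u by (simp add: rinv_minus rinv_power2_cancel)
  then have "inv (st_w G f i u) \<otimes> f (xg i (- (u ^ 2 * s))) = f (xg (\<not> i) s) \<otimes> inv (st_w G f i u)"
    using st_w_commute_same[of "- u" i "- (u ^ 2 * s)"] u by (simp add: st_w_minus)
  from mult_eq_swap_inv[OF _ _ _ this] show ?thesis by simp
qed

lemma st_h_commute_same:
  assumes u: "u dvd 1"
  shows "st_h G f i u \<otimes> f (xg i t) = f (xg i (u ^ 2 * t)) \<otimes> st_h G f i u"
proof -
  have "st_h G f i u \<otimes> f (xg i t) = st_w G f i u \<otimes> (st_w G f i (- 1) \<otimes> f (xg i t))"
    by (simp add: st_h_def m_assoc)
  also have "\<dots> = st_w G f i u \<otimes> f (xg (\<not> i) (- t)) \<otimes> st_w G f i (- 1)"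
    by (simp add: st_w_commute_same m_assoc)
  also have "\<dots> = f (xg i (u ^ 2 * t)) \<otimes> st_h G f i u"
    using u by (simp add: st_w_commute_opp st_h_def m_assoc)
  finally show ?thesis .
qed

lemma st_h_commute_opp:
  assumes u: "u dvd 1"
  shows "st_h G f i u \<otimes> f (xg (\<not> i) t) = f (xg (\<not> i) (rinv u ^ 2 * t)) \<otimes> st_h G f i u"
proof -
  have "st_h G f i u \<otimes> f (xg (\<not> i) t) = st_w G f i u \<otimes> (st_w G f i (- 1) \<otimes> f (xg (\<not> i) t))"
    by (simp add: st_h_def m_assoc)
  also have "\<dots> = st_w G f i u \<otimes> f (xg i (- t)) \<otimes> st_w G f i (- 1)"
    by (simp add: st_w_commute_opp m_assoc)
  also have "\<dots> = f (xg (\<not> i) (rinv u ^ 2 * t)) \<otimes> st_h G f i u"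
    using u by (simp add: st_w_commute_same st_h_def m_assoc)
  finally show ?thesis .
qed

definition scales :: "'a \<Rightarrow> bool \<Rightarrow> 'r \<Rightarrow> bool" where
  "scales a j \<alpha> \<longleftrightarrow> (\<forall>t. a \<otimes> f (xg j t) = f (xg j (\<alpha> * t)) \<otimes> a)"

lemma scales_mult:
  assumes "a \<in> carrier G" "b \<in> carrier G" "scales a j \<alpha>" "scales b j \<beta>"
  shows "scales (a \<otimes> b) j (\<alpha> * \<beta>)"
  using assms by (simp add: scales_def m_assoc mult.assoc) (metis gen_closed m_assoc)

lemma scales_inv:
  assumes a: "a \<in> carrier G" and "scales a j \<alpha>" and "\<alpha> * \<beta> = 1"
  shows "scales (inv a) j \<beta>"
  unfolding scales_def
proof
  fix t
  have "a \<otimes> f (xg j (\<beta> * t)) = f (xg j t) \<otimes> a"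
    using assms by (simp add: scales_def mult.assoc[symmetric])
  from mult_eq_swap_inv[OF a _ _ this] show "inv a \<otimes> f (xg j t) = f (xg j (\<beta> * t)) \<otimes> inv a"
    by simp
qed

text \<open>Conjugation by \<open>h\<^sub>1\<^sub>2(w)\<close> scales \<open>x\<^sub>1\<^sub>2\<close> by \<open>w\<^sup>2\<close> and \<open>x\<^sub>2\<^sub>1\<close> by \<open>w\<^sup>-\<^sup>2\<close>, so conjugation by
  \<open>c(u,v)\<close> scales both by \<open>u\<^sup>2 v\<^sup>2 (uv)\<^sup>-\<^sup>2 = 1\<close>.\<close>
lemma st_symbol_commute_gen:
  assumes u: "u dvd 1" and v: "v dvd 1"
  shows "st_symbol G f u v \<otimes> f g = f g \<otimes> st_symbol G f u v"
proof -
  have "scales (st_symbol G f u v) j 1" for j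
  proof -
    define \<sigma> where "\<sigma> w = (if j then w ^ 2 else rinv w ^ 2)" for w :: 'r
    have scales_h: "scales (st_h G f True w) j (\<sigma> w)" if "w dvd 1" for w
      using st_h_commute_same[OF that, of True] st_h_commute_opp[OF that, of True]
      by (cases j) (simp_all add: scales_def \<sigma>_def)
    have \<sigma>_rinv: "\<sigma> w * \<sigma> (rinv w) = 1" if "w dvd 1" for w
      using that by (simp add: \<sigma>_def power_mult_distrib[symmetric] mult.commute)
    have "u * v * (rinv u * rinv v) = (u * rinv u) * (v * rinv v)"
      by (simp only: mult_ac)
    then have cancel: "u * v * (rinv u * rinv v) = 1" "rinv u * rinv v * (u * v) = 1"
      using u v by (simp_all add: mult.commute)
    then have "\<sigma> u * \<sigma> v * \<sigma> (rinv (u * v)) = 1"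
      using u v by (simp add: \<sigma>_def unit_mult_unit rinv_mult power_mult_distrib[symmetric])
    moreover have "scales (st_symbol G f u v) j (\<sigma> u * \<sigma> v * \<sigma> (rinv (u * v)))"
      unfolding st_symbol_def using u v unit_mult_unit[OF u v]
      by (intro scales_mult scales_inv[OF _ scales_h \<sigma>_rinv] scales_h) auto
    ultimately show ?thesis by simp
  qed
  then show ?thesis by (cases g) (metis scales_def mult_1 xg.simps)+
qed

lemma st_w_hom: "group_hom G H h \<Longrightarrow> st_w H (\<lambda>g. h (f g)) i u = h (st_w G f i u)"
  by (simp add: st_w_def group_hom.hom_mult)

lemma st_h_hom: "group_hom G H h \<Longrightarrow> st_h H (\<lambda>g. h (f g)) i u = h (st_h G f i u)"
  by (simp add: st_h_def st_w_hom group_hom.hom_mult)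

lemma st_family_hom_image:
  assumes h: "group_hom G H h"
  shows "st_family H (\<lambda>g. h (f g))"
proof -
  interpret group_hom G H h by (rule h)
  show ?thesis
  proof unfold_locales
    show "h (f (xg i s)) \<otimes>\<^bsub>H\<^esub> h (f (xg i t)) = h (f (xg i (s + t)))" for i s t
      by (simp flip: hom_mult add: gen_add)
    show "st_w H (\<lambda>g. h (f g)) i u \<otimes>\<^bsub>H\<^esub> h (f (xg i t)) \<otimes>\<^bsub>H\<^esub> st_w H (\<lambda>g. h (f g)) i (- u)
        = h (f (xg (\<not> i) (- (rinv u ^ 2 * t))))" if "u dvd 1" for u i t
      using st_w_conj[OF that, of i t] by (simp flip: hom_mult add: st_w_hom[OF h])
  qed simp
qed

lemma eval_w_word: "eval_word G f (w_word i u) = st_w G f i u"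
  by (simp add: w_word_def st_w_def eval_word_append m_assoc)

lemma eval_c_word: "eval_word G f (c_word u v) = st_symbol G f u v"
  by (simp add: c_word_def h12_word_def st_symbol_def st_h_def eval_word_append eval_w_word
      eval_word_inv_word m_assoc)

lemma St_rels_hold: "(l, r) \<in> St_rels \<Longrightarrow> eval_word G f l = eval_word G f r"
  unfolding St_rels_def
  by (auto simp: eval_word_append eval_w_word gen_add st_w_conj[symmetric] m_assoc)

lemma X21_zero [simp]: "f (X21 0) = \<one>" and X12_zero [simp]: "f (X12 0) = \<one>"
  using gen_zero[of False] gen_zero[of True] by simp_all

abbreviation w0 :: 'a where "w0 \<equiv> st_w G f False (- 1)"

lemma w0_commute_X21: "w0 \<otimes> f (X21 t) = f (X12 (- t)) \<otimes> w0"
  using st_w_commute_same[of "- 1" False t] by simp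

lemma w0_commute_X12: "w0 \<otimes> f (X12 s) = f (X21 (- s)) \<otimes> w0"
  using st_w_commute_opp[of "- 1" False s] by simp

lemma w0_commute_X21_assoc: "r \<in> carrier G \<Longrightarrow> w0 \<otimes> (f (X21 t) \<otimes> r) = f (X12 (- t)) \<otimes> (w0 \<otimes> r)"
  by (simp add: m_assoc[symmetric] w0_commute_X21)

lemma w0_commute_X12_assoc: "r \<in> carrier G \<Longrightarrow> w0 \<otimes> (f (X12 s) \<otimes> r) = f (X21 (- s)) \<otimes> (w0 \<otimes> r)"
  by (simp add: m_assoc[symmetric] w0_commute_X12)

lemma X21_add_assoc: "r \<in> carrier G \<Longrightarrow> f (X21 s) \<otimes> (f (X21 t) \<otimes> r) = f (X21 (s + t)) \<otimes> r"
  using gen_add_assoc[of r False s t] by simp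

lemma X12_add_assoc: "r \<in> carrier G \<Longrightarrow> f (X12 s) \<otimes> (f (X12 t) \<otimes> r) = f (X12 (s + t)) \<otimes> r"
  using gen_add_assoc[of r True s t] by simp

lemmas w0_simps = m_assoc w0_commute_X21 w0_commute_X12 w0_commute_X21_assoc w0_commute_X12_assoc
  X21_add_assoc X12_add_assoc gen_add[of False, simplified] gen_add[of True, simplified]

lemma st_w12_eq: "st_w G f True u = f (X12 u) \<otimes> (f (X21 (- rinv u)) \<otimes> f (X12 u))"
  by (simp add: st_w_def m_assoc)

lemma w0_eq_st_w12: "w0 = st_w G f True 1"
proof -
  have "w0 \<otimes> w0 = w0 \<otimes> (f (X21 (- 1)) \<otimes> (f (X12 1) \<otimes> f (X21 (- 1))))"
    by (simp add: st_w_def m_assoc)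
  also have "\<dots> = st_w G f True 1 \<otimes> w0"
    by (simp add: st_w12_eq w0_simps)
  finally show ?thesis by simp
qed

lemma st_w12_minus_1: "st_w G f True (- 1) = inv w0"
  using st_w_minus[of 1 True] w0_eq_st_w12 by simp

lemma st_h12_eq: "st_h G f True u = st_w G f True u \<otimes> inv w0"
  by (simp add: st_h_def st_w12_minus_1)

end

section \<open>Families satisfying the relations of C(A)\<close>

definition c_h :: "('b, 'c) monoid_scheme \<Rightarrow> ('a::comm_ring_1 \<Rightarrow> 'b) \<Rightarrow> 'a \<Rightarrow> 'b" where
  "c_h G E u = E (- u) \<otimes>\<^bsub>G\<^esub> (E (- rinv u) \<otimes>\<^bsub>G\<^esub> E (- u))"

text \<open>\<open>c_of_st\<close> is the assignment \<open>\<epsilon>(a) \<mapsto> w\<^sub>2\<^sub>1(-1) x\<^sub>2\<^sub>1(a)\<close> of the theorem; \<open>st_of_c\<close> inverts it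
  on generators, because \<open>\<epsilon>(0)\<close> corresponds to \<open>w\<^sub>2\<^sub>1(-1)\<close>.\<close>
definition c_of_st :: "('b, 'c) monoid_scheme \<Rightarrow> ('a::comm_ring_1 st_gen \<Rightarrow> 'b) \<Rightarrow> 'a \<Rightarrow> 'b" where
  "c_of_st G f a = st_w G f False (- 1) \<otimes>\<^bsub>G\<^esub> f (X21 a)"

definition st_of_c :: "('b, 'c) monoid_scheme \<Rightarrow> ('a::comm_ring_1 \<Rightarrow> 'b) \<Rightarrow> 'a st_gen \<Rightarrow> 'b" where
  "st_of_c G E g = (case g of
      X12 t \<Rightarrow> E (- t) \<otimes>\<^bsub>G\<^esub> inv\<^bsub>G\<^esub> E 0
    | X21 t \<Rightarrow> inv\<^bsub>G\<^esub> E 0 \<otimes>\<^bsub>G\<^esub> E t)"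

lemma (in group_hom) hom_st_of_c:
  "(\<And>a. E a \<in> carrier G) \<Longrightarrow> h (st_of_c G E g) = st_of_c H (\<lambda>a. h (E a)) g"
  by (cases g) (simp_all add: st_of_c_def)

locale c_family = group G for G (structure) +
  fixes E :: "'r::comm_ring_1 \<Rightarrow> 'a"
  assumes eps_closed [simp]: "E a \<in> carrier G"
    and c_h_mult: "u dvd 1 \<Longrightarrow> v dvd 1 \<Longrightarrow> c_h G E u \<otimes> c_h G E v = c_h G E (u * v)"
    and eps_eps0_eps: "E a \<otimes> (E 0 \<otimes> E b) = c_h G E (- 1) \<otimes> E (a + b)"
    and c_h_conj: "u dvd 1 \<Longrightarrow> c_h G E u \<otimes> (E a \<otimes> c_h G E u) = E (u ^ 2 * a)"
begin

abbreviation e0 :: 'a where "e0 \<equiv> E 0"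

abbreviation h_m1 :: 'a where "h_m1 \<equiv> c_h G E (- 1)"

lemma c_h_closed [simp]: "c_h G E u \<in> carrier G"
  by (simp add: c_h_def)

lemma e0_square: "e0 \<otimes> e0 = h_m1"
proof -
  have "e0 \<otimes> e0 \<otimes> e0 = h_m1 \<otimes> e0" using eps_eps0_eps[of 0 0] by (simp add: m_assoc)
  then show ?thesis by simp
qed

lemma c_h_1: "c_h G E 1 = \<one>"
  using c_h_mult[of 1 1] by simp

lemma h_m1_square: "h_m1 \<otimes> h_m1 = \<one>"
  using c_h_mult[of "- 1" "- 1"] c_h_1 by simp

lemma h_m1_square_assoc: "r \<in> carrier G \<Longrightarrow> h_m1 \<otimes> (h_m1 \<otimes> r) = r"
  using h_m1_square by (simp add: m_assoc[symmetric])

lemma h_m1_commute: "h_m1 \<otimes> E a = E a \<otimes> h_m1"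
proof -
  have "E a \<otimes> (e0 \<otimes> e0) = h_m1 \<otimes> E a" using eps_eps0_eps[of a 0] by (simp add: m_assoc)
  then show ?thesis using e0_square by simp
qed

lemma h_m1_commute_assoc: "r \<in> carrier G \<Longrightarrow> h_m1 \<otimes> (E a \<otimes> r) = E a \<otimes> (h_m1 \<otimes> r)"
  by (simp add: m_assoc[symmetric] h_m1_commute)

lemma inv_e0: "inv e0 = e0 \<otimes> h_m1"
proof -
  have "e0 \<otimes> h_m1 \<otimes> e0 = e0 \<otimes> e0 \<otimes> h_m1" by (simp add: m_assoc h_m1_commute)
  also have "\<dots> = \<one>" using e0_square h_m1_square by simp
  finally show ?thesis by (simp add: inv_equality)
qed

lemma h_m1_commute_inv_e0_assoc: "r \<in> carrier G \<Longrightarrow> h_m1 \<otimes> (inv e0 \<otimes> r) = inv e0 \<otimes> (h_m1 \<otimes> r)"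
  by (simp add: inv_e0 m_assoc h_m1_commute_assoc)

lemma inv_e0_square: "inv e0 \<otimes> inv e0 = h_m1"
proof -
  have "inv h_m1 = h_m1" using h_m1_square by (simp add: inv_equality)
  then show ?thesis by (simp add: inv_mult_group[symmetric] e0_square)
qed

lemma inv_e0_square_assoc: "r \<in> carrier G \<Longrightarrow> inv e0 \<otimes> (inv e0 \<otimes> r) = h_m1 \<otimes> r"
  by (simp add: m_assoc[symmetric] inv_e0_square)

lemma eps_add: "E a \<otimes> (inv e0 \<otimes> E b) = E (a + b)"
proof -
  have "E a \<otimes> (inv e0 \<otimes> E b) = (E a \<otimes> (e0 \<otimes> E b)) \<otimes> h_m1"
    by (simp add: inv_e0 m_assoc h_m1_commute)
  also have "\<dots> = E (a + b) \<otimes> (h_m1 \<otimes> h_m1)"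
    by (simp add: eps_eps0_eps m_assoc h_m1_commute_assoc)
  finally show ?thesis by (simp add: h_m1_square)
qed

lemma eps_add_assoc: "r \<in> carrier G \<Longrightarrow> E a \<otimes> (inv e0 \<otimes> (E b \<otimes> r)) = E (a + b) \<otimes> r"
  by (simp add: m_assoc[symmetric] eps_add)

lemma inv_c_h: "u dvd 1 \<Longrightarrow> inv (c_h G E u) = c_h G E (rinv u)"
  using c_h_mult[of "rinv u" u] c_h_1 by (simp add: inv_equality mult.commute)

lemma h_m1_mult_c_h: "u dvd 1 \<Longrightarrow> h_m1 \<otimes> c_h G E u = c_h G E (- u)"
  using c_h_mult[of "- 1" u] by simp

lemma c_h_mult_h_m1: "u dvd 1 \<Longrightarrow> c_h G E u \<otimes> h_m1 = c_h G E (- u)"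
  using c_h_mult[of u "- 1"] by simp

lemma h_m1_mult_c_h_assoc: "u dvd 1 \<Longrightarrow> r \<in> carrier G \<Longrightarrow> h_m1 \<otimes> (c_h G E u \<otimes> r) = c_h G E (- u) \<otimes> r"
  by (simp add: m_assoc[symmetric] h_m1_mult_c_h)

lemma c_h_mult_h_m1_assoc: "u dvd 1 \<Longrightarrow> r \<in> carrier G \<Longrightarrow> c_h G E u \<otimes> (h_m1 \<otimes> r) = c_h G E (- u) \<otimes> r"
  by (simp add: m_assoc[symmetric] c_h_mult_h_m1)

lemma c_h_conj_assoc:
  "u dvd 1 \<Longrightarrow> r \<in> carrier G \<Longrightarrow> c_h G E u \<otimes> (E a \<otimes> (c_h G E u \<otimes> r)) = E (u ^ 2 * a) \<otimes> r"
  by (simp add: m_assoc[symmetric] c_h_conj[symmetric])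

lemma c_h_commute_inv_e0:
  assumes u: "u dvd 1"
  shows "c_h G E u \<otimes> inv e0 = inv e0 \<otimes> c_h G E (rinv u)"
proof -
  have "inv (c_h G E u \<otimes> (e0 \<otimes> c_h G E u)) = inv e0" using c_h_conj[OF u, of 0] by simp
  then have "c_h G E (rinv u) \<otimes> inv e0 \<otimes> c_h G E (rinv u) = inv e0"
    using u by (simp add: inv_mult_group inv_c_h m_assoc)
  then have "c_h G E u \<otimes> (c_h G E (rinv u) \<otimes> inv e0 \<otimes> c_h G E (rinv u)) = c_h G E u \<otimes> inv e0"
    by simp
  then show ?thesis using u c_h_mult[of u "rinv u"] c_h_1 by (simp add: m_assoc[symmetric])
qed

lemma c_h_commute_inv_e0_assoc:
  "u dvd 1 \<Longrightarrow> r \<in> carrier G \<Longrightarrow> c_h G E u \<otimes> (inv e0 \<otimes> r) = inv e0 \<otimes> (c_h G E (rinv u) \<otimes> r)"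
  by (simp add: m_assoc[symmetric] c_h_commute_inv_e0)

lemma inv_e0_commute_c_h: "u dvd 1 \<Longrightarrow> inv e0 \<otimes> c_h G E u = c_h G E (rinv u) \<otimes> inv e0"
  using c_h_commute_inv_e0[of "rinv u"] by simp

lemma inv_e0_commute_c_h_assoc:
  "u dvd 1 \<Longrightarrow> r \<in> carrier G \<Longrightarrow> inv e0 \<otimes> (c_h G E u \<otimes> r) = c_h G E (rinv u) \<otimes> (inv e0 \<otimes> r)"
  by (simp add: m_assoc[symmetric] inv_e0_commute_c_h)

lemma c_h_fold_assoc: "r \<in> carrier G \<Longrightarrow> E (- u) \<otimes> (E (- rinv u) \<otimes> (E (- u) \<otimes> r)) = c_h G E u \<otimes> r"
  by (simp add: c_h_def m_assoc)

lemma c_h_minus_fold_assoc: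
  "u dvd 1 \<Longrightarrow> r \<in> carrier G \<Longrightarrow> E u \<otimes> (E (rinv u) \<otimes> (E u \<otimes> r)) = c_h G E (- u) \<otimes> r"
  by (simp add: c_h_def m_assoc rinv_minus)

lemma st_of_c_closed [simp]: "st_of_c G E g \<in> carrier G"
  by (cases g) (simp_all add: st_of_c_def)

lemma st_of_c_X21: "st_of_c G E (X21 t) = inv e0 \<otimes> E t"
  by (simp add: st_of_c_def)

lemma st_of_c_X12: "st_of_c G E (X12 t) = E (- t) \<otimes> inv e0"
  by (simp add: st_of_c_def)

lemma st_w21_of_c: "u dvd 1 \<Longrightarrow> st_w G (st_of_c G E) False u = inv e0 \<otimes> c_h G E u"
  by (simp add: st_w_def st_of_c_X21 st_of_c_X12 m_assoc inv_e0_square_assoc h_m1_commute_assoc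
      h_m1_commute c_h_minus_fold_assoc c_h_mult_h_m1[of "- u", simplified])

lemma st_w12_of_c: "u dvd 1 \<Longrightarrow> st_w G (st_of_c G E) True u = c_h G E (- u) \<otimes> inv e0"
  by (simp add: st_w_def st_of_c_X21 st_of_c_X12 m_assoc inv_e0_square_assoc h_m1_commute_assoc
      c_h_fold_assoc c_h_mult_h_m1_assoc)

lemma st_family_st_of_c: "st_family G (st_of_c G E)"
proof unfold_locales
  show "st_of_c G E (xg i s) \<otimes> st_of_c G E (xg i t) = st_of_c G E (xg i (s + t))" for i s t
    by (cases i) (simp_all add: st_of_c_X21 st_of_c_X12 m_assoc eps_add_assoc eps_add add.commute)
next
  fix i and u t :: 'r
  assume u: "u dvd 1"
  show "st_w G (st_of_c G E) i u \<otimes> st_of_c G E (xg i t) \<otimes> st_w G (st_of_c G E) i (- u)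
      = st_of_c G E (xg (\<not> i) (- (rinv u ^ 2 * t)))"
  proof (cases i)
    case True
    have "st_w G (st_of_c G E) True u \<otimes> st_of_c G E (X12 t) \<otimes> st_w G (st_of_c G E) True (- u)
        = c_h G E (- u) \<otimes> (inv e0 \<otimes> (E (- t) \<otimes> (inv e0 \<otimes> (c_h G E u \<otimes> inv e0))))"
      using u by (simp add: st_w12_of_c st_of_c_X12 m_assoc)
    also have "\<dots> = inv e0 \<otimes> E (- (rinv u ^ 2 * t))"
      using u by (simp add: c_h_commute_inv_e0 c_h_commute_inv_e0_assoc inv_e0_square_assoc
          h_m1_mult_c_h rinv_minus c_h_conj)
    finally show ?thesis using True by (simp add: st_of_c_X21)
  next
    case False
    have "st_w G (st_of_c G E) False u \<otimes> st_of_c G E (X21 t) \<otimes> st_w G (st_of_c G E) False (- u)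
        = inv e0 \<otimes> (c_h G E u \<otimes> (inv e0 \<otimes> (E t \<otimes> (inv e0 \<otimes> c_h G E (- u)))))"
      using u by (simp add: st_w21_of_c st_of_c_X21 m_assoc)
    also have "\<dots> = E (rinv u ^ 2 * t) \<otimes> inv e0"
      using u by (simp add: inv_e0_commute_c_h inv_e0_commute_c_h_assoc inv_e0_square_assoc
          h_m1_mult_c_h_assoc h_m1_commute_assoc rinv_minus c_h_conj_assoc)
    finally show ?thesis using False by (simp add: st_of_c_X12)
  qed
qed simp

lemma st_h12_of_c: "u dvd 1 \<Longrightarrow> st_h G (st_of_c G E) True u = c_h G E u"
  by (simp add: st_h_def st_w12_of_c m_assoc c_h_1 inv_e0_square_assoc inv_e0_square c_h_mult_h_m1
      rinv_minus)

lemma st_symbol_of_c: "u dvd 1 \<Longrightarrow> v dvd 1 \<Longrightarrow> st_symbol G (st_of_c G E) u v = \<one>"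
  by (simp add: st_symbol_def st_h12_of_c unit_mult_unit c_h_mult)

lemma c_of_st_of_c: "c_of_st G (st_of_c G E) a = E a"
  by (simp add: c_of_st_def st_w21_of_c st_of_c_X21 m_assoc inv_e0_square_assoc
      h_m1_commute_inv_e0_assoc h_m1_square_assoc)

lemma eval_h_word: "eval_word G E (h_word u) = c_h G E u"
  by (simp add: h_word_def c_h_def eval_word_append)

lemma CA_rels_hold: "(l, r) \<in> CA_rels \<Longrightarrow> eval_word G E l = eval_word G E r"
  unfolding CA_rels_def
  by (auto simp: eval_word_append eval_h_word c_h_mult eps_eps0_eps c_h_conj)

end

locale st_family_trivial_symbols = st_family +
  assumes st_h12_mult: "u dvd 1 \<Longrightarrow> v dvd 1 \<Longrightarrow> st_h G f True u \<otimes> st_h G f True v = st_h G f True (u * v)"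
begin

lemma w0_power4: "w0 \<otimes> (w0 \<otimes> (w0 \<otimes> w0)) = \<one>"
proof -
  have "st_h G f True (- 1) \<otimes> st_h G f True (- 1) = st_h G f True 1"
    using st_h12_mult[of "- 1" "- 1"] by simp
  then have "inv (w0 \<otimes> (w0 \<otimes> (w0 \<otimes> w0))) = \<one>"
    by (simp add: st_h12_eq st_w12_minus_1 w0_eq_st_w12[symmetric] inv_mult_group m_assoc)
  then show ?thesis by simp
qed

lemma w0_power4_assoc: "r \<in> carrier G \<Longrightarrow> w0 \<otimes> (w0 \<otimes> (w0 \<otimes> (w0 \<otimes> r))) = r"
  using w0_power4 by (simp add: m_assoc[symmetric])

lemma inv_w0: "inv w0 = w0 \<otimes> (w0 \<otimes> w0)"
  using w0_power4 by (simp add: inv_equality m_assoc[symmetric])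

lemmas w0_simps_trivial_symbols = w0_simps w0_power4 w0_power4_assoc inv_w0

lemma st_w12_square: "u dvd 1 \<Longrightarrow> st_w G f True u \<otimes> st_w G f True u = w0 \<otimes> w0"
proof -
  assume u: "u dvd 1"
  have "st_h G f True (- 1) \<otimes> st_h G f True u = st_h G f True (- u)"
    using st_h12_mult[of "- 1" u] u by simp
  then have "inv w0 \<otimes> inv w0 \<otimes> st_w G f True u = inv (st_w G f True u)"
    using u by (simp add: st_h12_eq st_w12_minus_1 w0_eq_st_w12[symmetric] st_w_minus m_assoc[symmetric])
  then have "inv (st_w G f True u) \<otimes> (w0 \<otimes> w0) = st_w G f True u"
    by (metis inv_closed inv_inv inv_mult_group m_closed st_w_closed)
  then show ?thesis by (metis inv_solve_left' m_closed st_w_closed)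
qed

lemma c_h_c_of_st: "u dvd 1 \<Longrightarrow> c_h G (c_of_st G f) u = st_h G f True u"
  by (simp add: c_h_def c_of_st_def st_h12_eq st_w12_eq w0_simps_trivial_symbols)

lemma c_family_c_of_st: "c_family G (c_of_st G f)"
proof unfold_locales
  show "c_of_st G f a \<in> carrier G" for a
    by (simp add: c_of_st_def)
  show "c_h G (c_of_st G f) u \<otimes> c_h G (c_of_st G f) v = c_h G (c_of_st G f) (u * v)"
    if "u dvd 1" "v dvd 1" for u v
    using that by (simp add: c_h_c_of_st st_h12_mult unit_mult_unit)
  show "c_of_st G f a \<otimes> (c_of_st G f 0 \<otimes> c_of_st G f b) = c_h G (c_of_st G f) (- 1) \<otimes> c_of_st G f (a + b)"
    for a b
    by (simp add: c_h_c_of_st st_h12_eq st_w12_minus_1 c_of_st_def w0_simps_trivial_symbols add.commute)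
  show "c_h G (c_of_st G f) u \<otimes> (c_of_st G f a \<otimes> c_h G (c_of_st G f) u) = c_of_st G f (u ^ 2 * a)"
    if u: "u dvd 1" for u a
  proof -
    have "f (X21 a) \<otimes> st_h G f True u = st_h G f True u \<otimes> f (X21 (u ^ 2 * a))"
      using st_h_commute_opp[OF u, of True "u ^ 2 * a"] u by (simp add: rinv_power2_cancel)
    then have "c_h G (c_of_st G f) u \<otimes> (c_of_st G f a \<otimes> c_h G (c_of_st G f) u)
        = st_h G f True u \<otimes> (w0 \<otimes> (st_h G f True u \<otimes> f (X21 (u ^ 2 * a))))"
      using u by (simp add: c_h_c_of_st c_of_st_def m_assoc)
    also have "\<dots> = (st_w G f True u \<otimes> st_w G f True u) \<otimes> (inv w0 \<otimes> f (X21 (u ^ 2 * a)))"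
      by (simp add: st_h12_eq m_assoc l_inv_assoc)
    finally show ?thesis
      using u by (simp add: st_w12_square c_of_st_def m_assoc r_inv_assoc)
  qed
qed

lemma st_of_c_of_st: "st_of_c G (c_of_st G f) g = f g"
  by (cases g) (simp_all add: st_of_c_def c_of_st_def m_assoc w0_commute_X21_assoc l_inv_assoc
      inv_mult_group r_inv_assoc)

end

lemma SL2_mult:
  "(a, b, c, d) \<otimes>\<^bsub>SL2\<^esub> (e, f, g, h) = (a * e + b * g, a * f + b * h, c * e + d * g, c * f + d * h)"
  by (simp add: SL2_def)

lemma SL2_carrier: "(a, b, c, d) \<in> carrier SL2 \<longleftrightarrow> a * d - b * c = 1"
  by (simp add: SL2_def)

lemma SL2_one: "\<one>\<^bsub>SL2\<^esub> = (1, 0, 0, 1)"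
  by (simp add: SL2_def)

lemma group_SL2: "group (SL2 :: ('a::comm_ring_1 \<times> 'a \<times> 'a \<times> 'a) monoid)"
proof (rule groupI)
  fix x y :: "'a \<times> 'a \<times> 'a \<times> 'a"
  assume "x \<in> carrier SL2" "y \<in> carrier SL2"
  moreover obtain a b c d e f g h where "x = (a, b, c, d)" "y = (e, f, g, h)"
    by (metis prod_cases4)
  moreover have "(a * e + b * g) * (c * f + d * h) - (a * f + b * h) * (c * e + d * g)
      = (a * d - b * c) * (e * h - f * g)"
    by (simp add: algebra_simps)
  ultimately show "x \<otimes>\<^bsub>SL2\<^esub> y \<in> carrier SL2"
    by (simp add: SL2_mult SL2_carrier)
next
  fix x y z :: "'a \<times> 'a \<times> 'a \<times> 'a"
  show "x \<otimes>\<^bsub>SL2\<^esub> y \<otimes>\<^bsub>SL2\<^esub> z = x \<otimes>\<^bsub>SL2\<^esub> (y \<otimes>\<^bsub>SL2\<^esub> z)"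
    by (cases x, cases y, cases z) (simp add: SL2_mult algebra_simps)
next
  fix x :: "'a \<times> 'a \<times> 'a \<times> 'a"
  assume x: "x \<in> carrier SL2"
  obtain a b c d where x_eq: "x = (a, b, c, d)" by (metis prod_cases4)
  then have "(d, - b, - c, a) \<in> carrier SL2 \<and> (d, - b, - c, a) \<otimes>\<^bsub>SL2\<^esub> x = \<one>\<^bsub>SL2\<^esub>"
    using x by (simp add: SL2_carrier SL2_mult SL2_one algebra_simps)
  then show "\<exists>y\<in>carrier SL2. y \<otimes>\<^bsub>SL2\<^esub> x = \<one>\<^bsub>SL2\<^esub>" by blast
qed (auto simp: SL2_one SL2_carrier SL2_mult)

lemma SL2_inv: "(a::'a::comm_ring_1) * d - b * c = 1 \<Longrightarrow> inv\<^bsub>SL2\<^esub> (a, b, c, d) = (d, - b, - c, a)"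
  by (rule group.inv_equality[OF group_SL2]) (simp_all add: SL2_carrier SL2_mult SL2_one algebra_simps)

lemma eps_mat_closed [simp]: "eps_mat a \<in> carrier SL2"
  by (simp add: eps_mat_def SL2_carrier)

lemma c_h_SL2_eps_mat: "(u::'a::comm_ring_1) dvd 1 \<Longrightarrow> c_h SL2 eps_mat u = (u, 0, 0, rinv u)"
  by (simp add: c_h_def eps_mat_def SL2_mult algebra_simps)

lemma c_family_SL2_eps_mat: "c_family (SL2 :: ('a::comm_ring_1 \<times> 'a \<times> 'a \<times> 'a) monoid) eps_mat"
proof (intro c_family.intro group_SL2 c_family_axioms.intro)
  fix u v a b :: 'a
  show "u dvd 1 \<Longrightarrow> v dvd 1 \<Longrightarrow> c_h SL2 eps_mat u \<otimes>\<^bsub>SL2\<^esub> c_h SL2 eps_mat v = c_h SL2 eps_mat (u * v)"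
    by (simp add: c_h_SL2_eps_mat unit_mult_unit SL2_mult rinv_mult)
  show "eps_mat a \<otimes>\<^bsub>SL2\<^esub> (eps_mat 0 \<otimes>\<^bsub>SL2\<^esub> eps_mat b) = c_h SL2 eps_mat (- 1) \<otimes>\<^bsub>SL2\<^esub> eps_mat (a + b)"
    by (simp add: c_h_SL2_eps_mat eps_mat_def SL2_mult)
  show "u dvd 1 \<Longrightarrow> c_h SL2 eps_mat u \<otimes>\<^bsub>SL2\<^esub> (eps_mat a \<otimes>\<^bsub>SL2\<^esub> c_h SL2 eps_mat u) = eps_mat (u ^ 2 * a)"
    by (simp add: c_h_SL2_eps_mat eps_mat_def SL2_mult power2_eq_square algebra_simps)
qed simp

lemma st_of_c_SL2_eps_mat: "st_of_c SL2 eps_mat g = phi_gen (g :: 'a::comm_ring_1 st_gen)"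
  by (cases g) (simp_all add: st_of_c_def eps_mat_def SL2_inv SL2_mult)

section \<open>Isomorphisms onto quotient groups\<close>

context normal
begin

lemma the_elem_image_rcos:
  assumes "group_hom G K \<delta>" "H \<subseteq> kernel G K \<delta>" "a \<in> carrier G"
  shows "the_elem (\<delta> ` (H #> a)) = \<delta> a"
proof -
  have "a \<in> H #> a" using rcos_self[OF assms(3) is_subgroup] .
  interpret group_hom G K \<delta> by fact
  have "\<delta> ` (H #> a) \<subseteq> {\<delta> a}"
    using assms(2,3) by (auto simp: r_coset_def kernel_def)
  moreover have "\<delta> a \<in> \<delta> ` (H #> a)"
    using \<open>a \<in> H #> a\<close> by blast
  ultimately show ?thesis by (metis the_elem_eq subset_singletonD empty_iff)
qed

lemma induced_FactGroup_hom:
  assumes \<delta>: "group_hom G K \<delta>" and H: "H \<subseteq> kernel G K \<delta>"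
  shows "(\<lambda>C. the_elem (\<delta> ` C)) \<in> hom (G Mod H) K"
proof (rule homI)
  interpret group_hom G K \<delta> by fact
  fix C D
  assume "C \<in> carrier (G Mod H)" "D \<in> carrier (G Mod H)"
  then obtain a b where a: "a \<in> carrier G" "C = H #> a" and b: "b \<in> carrier G" "D = H #> b"
    unfolding carrier_FactGroup by blast
  then show "the_elem (\<delta> ` C) \<in> carrier K"
    by (simp add: the_elem_image_rcos[OF \<delta> H])
  have "C \<otimes>\<^bsub>G Mod H\<^esub> D = H #> (a \<otimes> b)"
    using a b by (simp add: rcos_sum)
  then show "the_elem (\<delta> ` (C \<otimes>\<^bsub>G Mod H\<^esub> D)) = the_elem (\<delta> ` C) \<otimes>\<^bsub>K\<^esub> the_elem (\<delta> ` D)"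
    using a b by (simp add: the_elem_image_rcos[OF \<delta> H])
qed

lemma iso_FactGroupI:
  assumes \<gamma>: "\<gamma> \<in> hom K (G Mod H)" and \<delta>: "\<And>a. a \<in> carrier G \<Longrightarrow> \<delta> a \<in> carrier K"
    and left: "\<And>P a. P \<in> carrier K \<Longrightarrow> a \<in> carrier G \<Longrightarrow> \<gamma> P = H #> a \<Longrightarrow> \<delta> a = P"
    and right: "\<And>a. a \<in> carrier G \<Longrightarrow> \<gamma> (\<delta> a) = H #> a"
  shows "\<gamma> \<in> iso K (G Mod H)"
  unfolding iso_def bij_betw_def
proof (intro CollectI conjI \<gamma> inj_onI)
  fix P Q
  assume P: "P \<in> carrier K" and Q: "Q \<in> carrier K" and "\<gamma> P = \<gamma> Q"
  obtain a where "a \<in> carrier G" "\<gamma> P = H #> a"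
    using hom_in_carrier[OF \<gamma> P] unfolding carrier_FactGroup by blast
  with left[OF P] left[OF Q] \<open>\<gamma> P = \<gamma> Q\<close> show "P = Q" by metis
next
  show "\<gamma> ` carrier K = carrier (G Mod H)"
    using hom_in_carrier[OF \<gamma>] right \<delta> unfolding carrier_FactGroup by blast
qed

lemma carrier_FactGroup_subcarrier:
  "carrier ((G\<lparr>carrier := S\<rparr>) Mod H) = (\<lambda>a. H #> a) ` S"
  by (auto simp: FactGroup_def RCOSETS_def r_coset_def)

lemma iso_FactGroup_kernels:
  assumes iso: "\<gamma> \<in> iso K (G Mod H)"
    and compat: "\<And>P a. P \<in> carrier K \<Longrightarrow> a \<in> carrier G \<Longrightarrow> \<gamma> P = H #> a \<Longrightarrow> \<psi> P = \<phi> a"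
  shows "\<gamma> \<in> iso (K\<lparr>carrier := kernel K S \<psi>\<rparr>) ((G\<lparr>carrier := kernel G S \<phi>\<rparr>) Mod H)"
proof -
  have \<gamma>: "\<gamma> \<in> hom K (G Mod H)" and inj: "inj_on \<gamma> (carrier K)"
    and surj: "\<gamma> ` carrier K = carrier (G Mod H)"
    using iso by (auto simp: iso_def bij_betw_def)
  have image: "\<gamma> ` kernel K S \<psi> = (\<lambda>a. H #> a) ` kernel G S \<phi>"
  proof (intro equalityI subsetI)
    fix C
    assume "C \<in> \<gamma> ` kernel K S \<psi>"
    then obtain P where P: "P \<in> carrier K" "\<psi> P = \<one>\<^bsub>S\<^esub>" and C: "C = \<gamma> P"
      by (auto simp: kernel_def)
    obtain a where "a \<in> carrier G" "\<gamma> P = H #> a"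
      using hom_in_carrier[OF \<gamma> P(1)] unfolding carrier_FactGroup by blast
    with P C compat show "C \<in> (\<lambda>a. H #> a) ` kernel G S \<phi>" by (auto simp: kernel_def)
  next
    fix C
    assume "C \<in> (\<lambda>a. H #> a) ` kernel G S \<phi>"
    then obtain a where a: "a \<in> carrier G" "\<phi> a = \<one>\<^bsub>S\<^esub>" and C: "C = H #> a"
      by (auto simp: kernel_def)
    then obtain P where "P \<in> carrier K" "\<gamma> P = C"
      using surj unfolding carrier_FactGroup by (metis image_iff image_eqI)
    with a C compat show "C \<in> \<gamma> ` kernel K S \<psi>" by (auto simp: kernel_def)
  qed
  let ?Q = "(G\<lparr>carrier := kernel G S \<phi>\<rparr>) Mod H"
  have carrier: "carrier ?Q = \<gamma> ` kernel K S \<psi>"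
    using image by (simp add: carrier_FactGroup_subcarrier)
  have kernel: "kernel K S \<psi> \<subseteq> carrier K" by (auto simp: kernel_def)
  show ?thesis
    unfolding iso_def bij_betw_def
  proof (intro CollectI conjI homI)
    show "\<gamma> (P \<otimes>\<^bsub>K\<lparr>carrier := kernel K S \<psi>\<rparr>\<^esub> Q) = \<gamma> P \<otimes>\<^bsub>?Q\<^esub> \<gamma> Q"
      if "P \<in> carrier (K\<lparr>carrier := kernel K S \<psi>\<rparr>)" "Q \<in> carrier (K\<lparr>carrier := kernel K S \<psi>\<rparr>)"
      for P Q
      using that kernel hom_mult[OF \<gamma>] by (auto simp: FactGroup_def)
    show "inj_on \<gamma> (carrier (K\<lparr>carrier := kernel K S \<psi>\<rparr>))"
      using inj_on_subset[OF inj kernel] by simp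
  qed (auto simp: carrier)
qed

end


definition eps_class :: "'a::comm_ring_1 \<Rightarrow> 'a word set" where
  "eps_class a = pres_class CA_rels (gen a)"

definition x_class :: "'a::comm_ring_1 st_gen \<Rightarrow> 'a st_gen word set" where
  "x_class g = pres_class St_rels (gen g)"

lemma group_CA: "group CA"
  by (simp add: CA_def group_presented_group)

lemma group_St: "group St"
  by (simp add: St_def group_presented_group)

lemma c_h_CA: "c_h CA eps_class u = pres_class CA_rels (h_word u)"
  by (simp add: c_h_def eps_class_def CA_def h_word_def)

lemma c_family_CA: "c_family CA (eps_class :: 'a::comm_ring_1 \<Rightarrow> _)"
proof (intro c_family.intro group_CA c_family_axioms.intro)
  fix u v a b :: 'a
  show "u dvd 1 \<Longrightarrow> v dvd 1 \<Longrightarrow> c_h CA eps_class u \<otimes>\<^bsub>CA\<^esub> c_h CA eps_class v = c_h CA eps_class (u * v)"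
    unfolding c_h_CA by (simp add: CA_def, rule pres_class_rel, auto simp: CA_rels_def)
  show "eps_class a \<otimes>\<^bsub>CA\<^esub> (eps_class 0 \<otimes>\<^bsub>CA\<^esub> eps_class b) = c_h CA eps_class (- 1) \<otimes>\<^bsub>CA\<^esub> eps_class (a + b)"
    unfolding c_h_CA eps_class_def
    by (simp add: CA_def, rule pres_class_rel, auto simp: CA_rels_def)
  show "u dvd 1 \<Longrightarrow> c_h CA eps_class u \<otimes>\<^bsub>CA\<^esub> (eps_class a \<otimes>\<^bsub>CA\<^esub> c_h CA eps_class u) = eps_class (u ^ 2 * a)"
    unfolding c_h_CA eps_class_def
    by (simp add: CA_def, rule pres_class_rel, auto simp: CA_rels_def)
qed (simp add: eps_class_def CA_def)

lemma st_w_St: "st_w St x_class i u = pres_class St_rels (w_word i u)"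
  by (simp add: st_w_def x_class_def St_def w_word_def)

lemma st_family_St: "st_family St (x_class :: 'a::comm_ring_1 st_gen \<Rightarrow> _)"
proof (intro st_family.intro group_St st_family_axioms.intro)
  fix i and s t :: 'a
  show "x_class (xg i s) \<otimes>\<^bsub>St\<^esub> x_class (xg i t) = x_class (xg i (s + t))"
    unfolding x_class_def by (simp add: St_def, rule pres_class_rel, auto simp: St_rels_def)
next
  fix i and u t :: 'a
  assume "u dvd 1"
  then have "(w_word i u @ gen (xg i t) @ w_word i (- u), gen (xg (\<not> i) (- (rinv u ^ 2 * t)))) \<in> St_rels"
    unfolding St_rels_def by blast
  then show "st_w St x_class i u \<otimes>\<^bsub>St\<^esub> x_class (xg i t) \<otimes>\<^bsub>St\<^esub> st_w St x_class i (- u)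
      = x_class (xg (\<not> i) (- (rinv u ^ 2 * t)))"
    unfolding st_w_St x_class_def by (simp add: St_def pres_class_rel)
qed (simp add: x_class_def St_def)

lemma C2_eq: "C2 = generate St {st_symbol St x_class u v | u v. u dvd 1 \<and> v dvd 1}"
proof -
  interpret st_family St x_class by (rule st_family_St)
  have symbol: "pres_class St_rels (c_word u v) = st_symbol St x_class u v" for u v
    by (simp add: pres_class_eq_eval_word[of St_rels "c_word u v"] eval_c_word flip: St_def x_class_def)
  show ?thesis unfolding C2_def symbol ..
qed

lemma C2_central: "c \<in> C2 \<Longrightarrow> P \<in> carrier St \<Longrightarrow> c \<otimes>\<^bsub>St\<^esub> P = P \<otimes>\<^bsub>St\<^esub> c"
proof -
  interpret st_family St x_class by (rule st_family_St)
  have symbol_central: "st_symbol St x_class u v \<otimes>\<^bsub>St\<^esub> P = P \<otimes>\<^bsub>St\<^esub> st_symbol St x_class u v"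
    if "u dvd 1" "v dvd 1" "P \<in> carrier St" for u v P
    using presented_group_central[of "st_symbol St x_class u v" St_rels P]
      st_symbol_closed[of u v] st_symbol_commute_gen[OF that(1,2)] that(3)
    by (simp add: St_def x_class_def)
  show "c \<in> C2 \<Longrightarrow> P \<in> carrier St \<Longrightarrow> c \<otimes>\<^bsub>St\<^esub> P = P \<otimes>\<^bsub>St\<^esub> c"
    unfolding C2_eq by (rule generate_commute) (auto simp: symbol_central)
qed

lemma C2_subset: "C2 \<subseteq> carrier St"
  unfolding C2_eq by (rule group.generate_incl[OF group_St])
    (auto intro: st_family.st_symbol_closed[OF st_family_St])

lemma C2_normal: "(C2 :: 'a::comm_ring_1 st_gen word set set) \<lhd> St"
proof -
  interpret St: group "St :: 'a st_gen word set monoid" by (rule group_St)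
  have "subgroup (C2 :: 'a st_gen word set set) St"
    unfolding C2_eq by (rule St.generate_is_subgroup)
      (auto intro: st_family.st_symbol_closed[OF st_family_St])
  moreover have "x \<otimes>\<^bsub>St\<^esub> c \<otimes>\<^bsub>St\<^esub> inv\<^bsub>St\<^esub> x \<in> C2"
    if x: "x \<in> carrier St" and c: "(c :: 'a st_gen word set) \<in> C2" for x c
  proof -
    have "c \<in> carrier St" using c C2_subset by blast
    then have "x \<otimes>\<^bsub>St\<^esub> c \<otimes>\<^bsub>St\<^esub> inv\<^bsub>St\<^esub> x = c"
      using x by (simp add: C2_central[OF c x, symmetric] St.m_assoc)
    with c show ?thesis by simp
  qed
  ultimately show ?thesis
    by (simp add: St.normal_inv_iff)
qed

lemma group_St_Mod_C2: "group (St Mod C2)"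
  by (rule normal.factorgroup_is_group[OF C2_normal])

lemma group_hom_St_Mod_C2: "group_hom St (St Mod C2) (\<lambda>a. C2 #>\<^bsub>St\<^esub> a)"
  by (simp add: group_hom_def group_hom_axioms_def group_St group_St_Mod_C2
      normal.r_coset_hom_Mod[OF C2_normal])

lemma st_family_trivial_symbols_St_Mod_C2:
  "st_family_trivial_symbols (St Mod C2) (\<lambda>g. C2 #>\<^bsub>St\<^esub> x_class (g :: 'a::comm_ring_1 st_gen))"
proof -
  interpret st_family St x_class by (rule st_family_St)
  interpret N: normal C2 St by (rule C2_normal)
  interpret \<pi>: group_hom St "St Mod C2" "\<lambda>a. C2 #>\<^bsub>St\<^esub> a" by (rule group_hom_St_Mod_C2)
  show ?thesis
  proof (intro st_family_trivial_symbols.intro st_family_hom_image st_family_trivial_symbols_axioms.intro)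
    show "group_hom St (St Mod C2) (\<lambda>a. C2 #>\<^bsub>St\<^esub> a)" ..
    fix u v :: 'a
    assume "u dvd 1" "v dvd 1"
    then have "st_symbol St x_class u v \<in> C2"
      unfolding C2_eq by (intro generate.incl) blast
    then have "st_h St x_class True u \<otimes>\<^bsub>St\<^esub> st_h St x_class True v \<in> C2 #>\<^bsub>St\<^esub> st_h St x_class True (u * v)"
      by (intro N.rcos_module_rev group_St) (simp_all add: st_symbol_def)
    then have coset: "C2 #>\<^bsub>St\<^esub> (st_h St x_class True u \<otimes>\<^bsub>St\<^esub> st_h St x_class True v)
        = C2 #>\<^bsub>St\<^esub> st_h St x_class True (u * v)"
      by (metis repr_independence N.is_subgroup st_h_closed)
    have "st_h (St Mod C2) (\<lambda>g. C2 #>\<^bsub>St\<^esub> x_class g) True u \<otimes>\<^bsub>St Mod C2\<^esub>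
        st_h (St Mod C2) (\<lambda>g. C2 #>\<^bsub>St\<^esub> x_class g) True v
        = (C2 #>\<^bsub>St\<^esub> st_h St x_class True u) <#>\<^bsub>St\<^esub> (C2 #>\<^bsub>St\<^esub> st_h St x_class True v)"
      by (simp only: st_h_hom[OF \<pi>.group_hom_axioms] mult_FactGroup)
    also have "\<dots> = C2 #>\<^bsub>St\<^esub> st_h St x_class True (u * v)"
      by (simp only: N.rcos_sum st_h_closed coset)
    also have "\<dots> = st_h (St Mod C2) (\<lambda>g. C2 #>\<^bsub>St\<^esub> x_class g) True (u * v)"
      by (simp only: st_h_hom[OF \<pi>.group_hom_axioms])
    finally show "st_h (St Mod C2) (\<lambda>g. C2 #>\<^bsub>St\<^esub> x_class g) True u \<otimes>\<^bsub>St Mod C2\<^esub>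
        st_h (St Mod C2) (\<lambda>g. C2 #>\<^bsub>St\<^esub> x_class g) True v
        = st_h (St Mod C2) (\<lambda>g. C2 #>\<^bsub>St\<^esub> x_class g) True (u * v)" .
  qed
qed

definition CA_to_St_Mod_C2 :: "'a::comm_ring_1 word set \<Rightarrow> 'a st_gen word set set" where
  "CA_to_St_Mod_C2 = pres_map (St Mod C2) (c_of_st (St Mod C2) (\<lambda>g. C2 #>\<^bsub>St\<^esub> x_class g))"

definition St_to_CA :: "'a::comm_ring_1 st_gen word set \<Rightarrow> 'a word set" where
  "St_to_CA = pres_map CA (st_of_c CA eps_class)"

lemma c_family_St_Mod_C2: "c_family (St Mod C2) (c_of_st (St Mod C2) (\<lambda>g. C2 #>\<^bsub>St\<^esub> x_class g))"
  by (rule st_family_trivial_symbols.c_family_c_of_st[OF st_family_trivial_symbols_St_Mod_C2])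

lemma CA_to_St_Mod_C2_hom: "CA_to_St_Mod_C2 \<in> hom CA (St Mod C2)"
  unfolding CA_to_St_Mod_C2_def CA_def
  by (rule group.pres_map_hom[OF group_St_Mod_C2 c_family.eps_closed c_family.CA_rels_hold])
    (use c_family_St_Mod_C2 in auto)

lemma CA_to_St_Mod_C2_eps_class:
  "CA_to_St_Mod_C2 (eps_class a) = c_of_st (St Mod C2) (\<lambda>g. C2 #>\<^bsub>St\<^esub> x_class g) (a :: 'a::comm_ring_1)"
proof -
  interpret Q: c_family "St Mod C2" "c_of_st (St Mod C2) (\<lambda>g. C2 #>\<^bsub>St\<^esub> x_class (g :: 'a st_gen))"
    by (rule c_family_St_Mod_C2)
  show ?thesis
    unfolding CA_to_St_Mod_C2_def eps_class_def by (simp add: Q.pres_map_pres_class Q.CA_rels_hold)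
qed

lemma c_of_st_St_Mod_C2:
  "c_of_st (St Mod C2) (\<lambda>g. C2 #>\<^bsub>St\<^esub> x_class g) a
    = C2 #>\<^bsub>St\<^esub> pres_class St_rels (w_word False (- 1) @ gen (X21 a))"
proof -
  interpret st_family St x_class by (rule st_family_St)
  interpret \<pi>: group_hom St "St Mod C2" "\<lambda>a. C2 #>\<^bsub>St\<^esub> a" by (rule group_hom_St_Mod_C2)
  have "c_of_st (St Mod C2) (\<lambda>g. C2 #>\<^bsub>St\<^esub> x_class g) a
      = C2 #>\<^bsub>St\<^esub> (st_w St x_class False (- 1) \<otimes>\<^bsub>St\<^esub> x_class (X21 a))"
    by (simp add: c_of_st_def st_w_hom[OF \<pi>.group_hom_axioms])
  then show ?thesis
    unfolding st_w_St by (simp add: x_class_def St_def)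
qed

lemma St_to_CA_hom: "St_to_CA \<in> hom St CA"
  unfolding St_to_CA_def St_def
  by (rule group.pres_map_hom[OF group_CA c_family.st_of_c_closed st_family.St_rels_hold])
    (use c_family_CA c_family.st_family_st_of_c in auto)

lemma St_to_CA_pres_class: "St_to_CA (pres_class St_rels w) = eval_word CA (st_of_c CA eps_class) w"
  unfolding St_to_CA_def
  by (rule group.pres_map_pres_class[OF group_CA c_family.st_of_c_closed st_family.St_rels_hold])
    (use c_family_CA c_family.st_family_st_of_c in auto)

lemma C2_subset_kernel_St_to_CA: "C2 \<subseteq> kernel St CA St_to_CA"
proof -
  interpret c_family CA eps_class by (rule c_family_CA)
  interpret \<delta>: st_family CA "st_of_c CA eps_class" by (rule st_family_st_of_c)
  interpret group_hom St CA St_to_CA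
    by (simp add: group_hom_def group_hom_axioms_def group_St group_CA St_to_CA_hom)
  show ?thesis
    unfolding C2_def
    by (rule G.generate_subgroup_incl[OF _ subgroup_kernel])
      (auto simp: kernel_def St_def St_to_CA_pres_class \<delta>.eval_c_word st_symbol_of_c)
qed

lemma St_to_CA_x_class: "St_to_CA (x_class g) = st_of_c CA eps_class g"
proof -
  interpret c_family CA eps_class by (rule c_family_CA)
  show ?thesis by (simp add: x_class_def St_to_CA_pres_class)
qed

lemma St_to_CA_left_inverse:
  assumes P: "P \<in> carrier CA" and a: "a \<in> carrier St" and "CA_to_St_Mod_C2 P = C2 #>\<^bsub>St\<^esub> a"
  shows "St_to_CA a = (P :: 'a::comm_ring_1 word set)"
proof -
  interpret c_family CA "eps_class :: 'a \<Rightarrow> _" by (rule c_family_CA)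
  interpret N: normal "C2 :: 'a st_gen word set set" St by (rule C2_normal)
  have \<delta>: "group_hom St CA (St_to_CA :: 'a st_gen word set \<Rightarrow> _)"
    by (simp add: group_hom_def group_hom_axioms_def group_St group_CA St_to_CA_hom)
  define \<delta>' where "\<delta>' = (\<lambda>C. the_elem ((St_to_CA :: 'a st_gen word set \<Rightarrow> _) ` C))"
  have \<delta>'_rcos: "\<delta>' (C2 #>\<^bsub>St\<^esub> b) = St_to_CA b" if "b \<in> carrier St" for b :: "'a st_gen word set"
    unfolding \<delta>'_def by (rule N.the_elem_image_rcos[OF \<delta> C2_subset_kernel_St_to_CA that])
  have "\<delta>' \<circ> CA_to_St_Mod_C2 \<in> hom CA (CA :: 'a word set monoid)"
    unfolding \<delta>'_def
    by (rule Group.hom_compose[OF CA_to_St_Mod_C2_hom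
          N.induced_FactGroup_hom[OF \<delta> C2_subset_kernel_St_to_CA]])
  moreover have "(\<lambda>P. P) \<in> hom CA (CA :: 'a word set monoid)" by (simp add: hom_def)
  moreover have "\<delta>' (CA_to_St_Mod_C2 (eps_class x)) = eps_class x" for x :: 'a
  proof -
    have "\<delta>' (CA_to_St_Mod_C2 (eps_class x)) = St_to_CA (pres_class St_rels (w_word False (- 1) @ gen (X21 x)))"
      unfolding CA_to_St_Mod_C2_eps_class c_of_st_St_Mod_C2 by (rule \<delta>'_rcos) (simp add: St_def)
    also have "\<dots> = c_of_st CA (st_of_c CA eps_class) x"
      by (simp add: St_to_CA_pres_class eval_word_append st_family.eval_w_word[OF st_family_st_of_c]
          c_of_st_def)
    finally show ?thesis by (simp add: c_of_st_of_c)
  qed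
  ultimately have "\<delta>' (CA_to_St_Mod_C2 P) = P"
    using hom_presented_group_eqI[of "\<delta>' \<circ> CA_to_St_Mod_C2" CA_rels "\<lambda>P. P" P] P
    by (simp add: CA_def eps_class_def)
  with assms show ?thesis by (simp add: \<delta>'_rcos)
qed

lemma CA_to_St_Mod_C2_St_to_CA:
  assumes a: "a \<in> carrier St"
  shows "CA_to_St_Mod_C2 (St_to_CA a) = C2 #>\<^bsub>St\<^esub> (a :: 'a::comm_ring_1 st_gen word set)"
proof -
  interpret c_family CA "eps_class :: 'a \<Rightarrow> _" by (rule c_family_CA)
  interpret Q: st_family_trivial_symbols "St Mod C2" "\<lambda>g. C2 #>\<^bsub>St\<^esub> x_class (g :: 'a st_gen)"
    by (rule st_family_trivial_symbols_St_Mod_C2)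
  interpret \<gamma>: group_hom CA "St Mod C2" CA_to_St_Mod_C2
    by (simp add: group_hom_def group_hom_axioms_def group_CA group_St_Mod_C2 CA_to_St_Mod_C2_hom)
  have "CA_to_St_Mod_C2 \<circ> St_to_CA \<in> hom St (St Mod C2)"
    by (rule Group.hom_compose[OF St_to_CA_hom CA_to_St_Mod_C2_hom])
  moreover have "(\<lambda>a. C2 #>\<^bsub>St\<^esub> a) \<in> hom St (St Mod C2)"
    by (rule normal.r_coset_hom_Mod[OF C2_normal])
  moreover have "CA_to_St_Mod_C2 (St_to_CA (x_class g)) = C2 #>\<^bsub>St\<^esub> x_class g" for g :: "'a st_gen"
    by (simp add: St_to_CA_x_class \<gamma>.hom_st_of_c CA_to_St_Mod_C2_eps_class Q.st_of_c_of_st)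
  ultimately show ?thesis
    using Q.hom_presented_group_eqI[of "CA_to_St_Mod_C2 \<circ> St_to_CA" St_rels "\<lambda>a. C2 #>\<^bsub>St\<^esub> a" a] a
    by (simp add: St_def x_class_def)
qed

lemma pres_map_phi_gen_eq_St_to_CA:
  assumes a: "a \<in> carrier St"
  shows "pres_map SL2 phi_gen a = pres_map SL2 eps_mat (St_to_CA (a :: 'a::comm_ring_1 st_gen word set))"
proof -
  interpret SL: c_family "SL2 :: ('a \<times> 'a \<times> 'a \<times> 'a) monoid" eps_mat by (rule c_family_SL2_eps_mat)
  have \<Psi>: "pres_map SL2 eps_mat \<in> hom (CA :: 'a word set monoid) SL2"
    unfolding CA_def by (rule SL.pres_map_hom[OF SL.eps_closed SL.CA_rels_hold])
  interpret \<Psi>: group_hom "CA :: 'a word set monoid" SL2 "pres_map SL2 eps_mat"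
    by (simp add: group_hom_def group_hom_axioms_def group_CA SL.group_axioms \<Psi>)
  have "pres_map SL2 eps_mat (eps_class b) = eps_mat b" for b :: 'a
    unfolding CA_def eps_class_def by (simp add: SL.pres_map_pres_class SL.CA_rels_hold)
  moreover have "pres_map SL2 eps_mat (st_of_c CA eps_class g)
      = st_of_c SL2 (\<lambda>b. pres_map SL2 eps_mat (eps_class b)) g" for g :: "'a st_gen"
    by (rule \<Psi>.hom_st_of_c) (rule c_family.eps_closed[OF c_family_CA])
  ultimately have "phi_gen g = (pres_map SL2 eps_mat \<circ> St_to_CA) (pres_class St_rels (gen g))"
    for g :: "'a st_gen"
    by (simp add: St_to_CA_x_class[unfolded x_class_def] st_of_c_SL2_eps_mat)
  then have "pres_map SL2 phi_gen a = (pres_map SL2 eps_mat \<circ> St_to_CA) a"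
    using SL.pres_map_eq_hom[OF Group.hom_compose[OF St_to_CA_hom \<Psi>, unfolded St_def]] a
    by (simp add: St_def)
  then show ?thesis by simp
qed

theorem theoremA14:
  shows "\<exists>\<gamma>. \<gamma> \<in> iso (CA :: ('a::comm_ring_1) word set monoid) (St Mod C2)
     \<and> (\<forall>a::'a. \<gamma> (pres_class CA_rels (gen a))
           = C2 #>\<^bsub>St\<^esub> pres_class St_rels (w_word False (- 1) @ gen (X21 a)))
     \<and> \<gamma> \<in> iso (CA\<lparr>carrier := UA\<rparr>) ((St\<lparr>carrier := K2\<rparr>) Mod C2)"
proof (intro exI conjI allI)
  interpret normal "C2 :: 'a st_gen word set set" St by (rule C2_normal)
  show iso: "(CA_to_St_Mod_C2 :: 'a word set \<Rightarrow> _) \<in> iso CA (St Mod C2)"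
    by (rule iso_FactGroupI[OF CA_to_St_Mod_C2_hom _ St_to_CA_left_inverse CA_to_St_Mod_C2_St_to_CA])
      (simp_all add: hom_in_carrier[OF St_to_CA_hom])
  show "CA_to_St_Mod_C2 (pres_class CA_rels (gen a))
      = C2 #>\<^bsub>St\<^esub> pres_class St_rels (w_word False (- 1) @ gen (X21 a))" for a :: 'a
    by (simp only: eps_class_def[symmetric] CA_to_St_Mod_C2_eps_class c_of_st_St_Mod_C2)
  have "(CA_to_St_Mod_C2 :: 'a word set \<Rightarrow> _) \<in> iso (CA\<lparr>carrier := kernel CA SL2 (pres_map SL2 eps_mat)\<rparr>)
      ((St\<lparr>carrier := kernel St SL2 (pres_map SL2 phi_gen)\<rparr>) Mod C2)"
    by (rule iso_FactGroup_kernels[OF iso]) (simp add: pres_map_phi_gen_eq_St_to_CA St_to_CA_left_inverse)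
  then show "(CA_to_St_Mod_C2 :: 'a word set \<Rightarrow> _) \<in> iso (CA\<lparr>carrier := UA\<rparr>) ((St\<lparr>carrier := K2\<rparr>) Mod C2)"
    by (simp add: UA_def K2_def kernel_def)
qed

end
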